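(* Consider MINTSS under the independent cascade (IC) model or the linear threshold (LT) model, with coverage threshold $\eta$ and shortfall $\epsilon>0$. For any $\phi>0$ there exists $\delta\in(0,1)$ such that, using $(1-\delta)$-approximate values of the coverage function $\sigma_m(\cdot)$ in place of its exact values, the greedy algorithm $\textsc{Greedy-Mintss}$ run with threshold $\eta-\epsilon$ approximates MINTSS within a factor of $(1+\phi)\cdot(1+\ln(\eta/\epsilon))$, i.e., the size (cost) of the seed set it returns is at most $(1+\phi)(1+\ln(\eta/\epsilon))$ times the minimum size (cost) of a seed set $S$ with $\sigma_m(S)\ge\eta$.
   Context: A social graph is a directed graph $G=(V,E)$. IC model: each arc $(v,u)$ has probability $p_{v,u}$; seed nodes are active at time $0$; when a node $v$ becomes active at time $t$, it gets one chance to activate each inactive out-neighbour $u$, succeeding independently with probability $p_{v,u}$, and then $u$ is active at time $t+1$; the process stops when no new node is activated. LT model: each arc $(v,u)$ has weight $b_{v,u}\ge 0$ with $\sum_v b_{v,u}\le 1$ for every $u$; each node $u$ draws a threshold $\theta_u$ uniformly from $[0,1]$; if at time $t$ the total weight from active in-neighbours of $u$ reaches $\theta_u$, $u$ becomes active at time $t+1$; nodes stay active. $\sigma_m(S)$ is the expected number of nodes eventually active when $S$ is the seed set. MINTSS: given $\eta\le|V|$ (and node costs $c:V\to\mathbb{R}^+$, unit costs in the unweighted case), find a seed set $S$ of minimum size (cost) with $\sigma_m(S)\ge\eta$. Algorithm $\textsc{Greedy-Mintss}$: start with $S=\emptyset$; while $\sigma_m(S)<\eta-\epsilon$, add to $S$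 a node $u$ maximizing $\frac{\min(\sigma_m(S\cup\{w\}),\eta)-\sigma_m(S)}{c(w)}$ over $w\in V\setminus S$. Using $(1-\delta)$-approximate values means replacing $\sigma_m$ throughout the algorithm by an estimate $\sigma'$ with $(1-\delta)\sigma_m(S)\le\sigma'(S)\le\sigma_m(S)$ for all $S$. *)

theory Defs
  imports "HOL-Probability.Probability"
begin

definition ic_instance :: "'a set \<Rightarrow> ('a \<times> 'a) set \<Rightarrow> ('a \<times> 'a \<Rightarrow> real) \<Rightarrow> bool" where
  "ic_instance V E p \<longleftrightarrow> finite V \<and> E \<subseteq> V \<times> V \<and> (\<forall>e\<in>E. 0 \<le> p e \<and> p e \<le> 1)"

text \<open>The IC diffusion process driven by the outcomes of the activation attempts:
  L is the set of arcs (v,u) whose (single) activation attempt succeeds, should it happen.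
  State at time t: (nodes active by time t, nodes newly activated at time t).\<close>
fun ic_state :: "'a set \<Rightarrow> ('a \<times> 'a) set \<Rightarrow> 'a set \<Rightarrow> nat \<Rightarrow> 'a set \<times> 'a set" where
  "ic_state V L S 0 = (S, S)"
| "ic_state V L S (Suc t) =
     (let (A, N) = ic_state V L S t;
          N' = {u \<in> V - A. \<exists>v\<in>N. (v, u) \<in> L}
      in (A \<union> N', N'))"

definition ic_final :: "'a set \<Rightarrow> ('a \<times> 'a) set \<Rightarrow> 'a set \<Rightarrow> 'a set" where
  "ic_final V L S = (\<Union>t. fst (ic_state V L S t))"

definition sigma_IC :: "'a set \<Rightarrow> ('a \<times> 'a) set \<Rightarrow> ('a \<times> 'a \<Rightarrow> real) \<Rightarrow> 'a set \<Rightarrow> real" where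
  "sigma_IC V E p S =
     measure_pmf.expectation (Pi_pmf E False (\<lambda>e. bernoulli_pmf (p e)))
       (\<lambda>X. real (card (ic_final V {e \<in> E. X e} S)))"

definition lt_instance :: "'a set \<Rightarrow> ('a \<times> 'a) set \<Rightarrow> ('a \<times> 'a \<Rightarrow> real) \<Rightarrow> bool" where
  "lt_instance V E b \<longleftrightarrow> finite V \<and> E \<subseteq> V \<times> V \<and> (\<forall>e\<in>E. 0 \<le> b e)
      \<and> (\<forall>u\<in>V. (\<Sum>v\<in>{v. (v, u) \<in> E}. b (v, u)) \<le> 1)"

fun lt_active :: "'a set \<Rightarrow> ('a \<times> 'a) set \<Rightarrow> ('a \<times> 'a \<Rightarrow> real) \<Rightarrow> ('a \<Rightarrow> real) \<Rightarrow> 'a set \<Rightarrow> nat \<Rightarrow> 'a set" where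
  "lt_active V E b \<theta> S 0 = S"
| "lt_active V E b \<theta> S (Suc t) =
     (let A = lt_active V E b \<theta> S t
      in A \<union> {u \<in> V. (\<Sum>v\<in>{v \<in> A. (v, u) \<in> E}. b (v, u)) \<ge> \<theta> u})"

definition lt_final :: "'a set \<Rightarrow> ('a \<times> 'a) set \<Rightarrow> ('a \<times> 'a \<Rightarrow> real) \<Rightarrow> ('a \<Rightarrow> real) \<Rightarrow> 'a set \<Rightarrow> 'a set" where
  "lt_final V E b \<theta> S = (\<Union>t. lt_active V E b \<theta> S t)"

definition sigma_LT :: "'a set \<Rightarrow> ('a \<times> 'a) set \<Rightarrow> ('a \<times> 'a \<Rightarrow> real) \<Rightarrow> 'a set \<Rightarrow> real" where
  "sigma_LT V E b S =
     integral\<^sup>L (PiM V (\<lambda>_. uniform_measure lborel {0..1::real}))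
       (\<lambda>\<theta>. real (card (lt_final V E b \<theta> S)))"

definition set_cost :: "('a \<Rightarrow> real) \<Rightarrow> 'a set \<Rightarrow> real" where
  "set_cost c S = (\<Sum>v\<in>S. c v)"

text \<open>Seed sets reachable by some execution of the greedy loop (ties broken arbitrarily).\<close>
inductive greedy_reach :: "'a set \<Rightarrow> ('a set \<Rightarrow> real) \<Rightarrow> ('a \<Rightarrow> real) \<Rightarrow> real \<Rightarrow> real \<Rightarrow> 'a set \<Rightarrow> bool"
  for V f c \<eta> \<epsilon> where
  start: "greedy_reach V f c \<eta> \<epsilon> {}"
| step: "greedy_reach V f c \<eta> \<epsilon> S \<Longrightarrow> f S < \<eta> - \<epsilon> \<Longrightarrow> u \<in> V - S \<Longrightarrow>
     (\<forall>w\<in>V - S. (min (f (S \<union> {w})) \<eta> - f S) / c w \<le> (min (f (S \<union> {u})) \<eta> - f S) / c u) \<Longrightarrow>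
     greedy_reach V f c \<eta> \<epsilon> (S \<union> {u})"

definition greedy_output :: "'a set \<Rightarrow> ('a set \<Rightarrow> real) \<Rightarrow> ('a \<Rightarrow> real) \<Rightarrow> real \<Rightarrow> real \<Rightarrow> 'a set \<Rightarrow> bool" where
  "greedy_output V f c \<eta> \<epsilon> S \<longleftrightarrow> greedy_reach V f c \<eta> \<epsilon> S \<and> \<not> (f S < \<eta> - \<epsilon>)"

end

theory Submission
  imports Defs
begin

(*
  Both spread functions are monotone and submodular.  Under IC, for a fixed outcome of the
  activation attempts the spread of S is the union of the live-arc reachability sets of the
  seeds, a coverage function.  Under LT, the activation probability of a non-seed node x is a
  nonnegative combination of activation probabilities in the graph without x, which gives
  submodularity by induction on the number of nodes.

  For a monotone submodular sigma and any T with sigma(T) >= eta, an exact greedy step u closes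
  at least the fraction c(u)/c(T) of the residual eta - sigma(S), so the residual decays like
  exp(-c(S)/c(T)) until it drops to epsilon; the last step costs at most c(T), whence the factor
  1 + ln(eta/epsilon).  The sets S and the greedy ratios range over finite sets, so for small
  delta every greedy choice made with approximate values is also an exact greedy choice, and the
  stopping test stays sound: the approximate run is an exact greedy run, and the bound holds
  even without the slack factor 1 + phi.
*)

section \<open>Monotone submodular set functions\<close>

definition monotone_submodular_on :: "'a set \<Rightarrow> ('a set \<Rightarrow> real) \<Rightarrow> bool" where
  "monotone_submodular_on V f \<longleftrightarrow>
     (\<forall>A B. A \<subseteq> B \<longrightarrow> B \<subseteq> V \<longrightarrow> f A \<le> f B) \<and>
     (\<forall>A B y. A \<subseteq> B \<longrightarrow> B \<subseteq> V \<longrightarrow> y \<in> V - B \<longrightarrow> f (B \<union> {y}) - f B \<le> f (A \<union> {y}) - f A)"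

lemma monotone_submodular_onD:
  assumes "monotone_submodular_on V f"
  shows monotone_submodular_on_mono: "A \<subseteq> B \<Longrightarrow> B \<subseteq> V \<Longrightarrow> f A \<le> f B"
    and monotone_submodular_on_submod:
      "A \<subseteq> B \<Longrightarrow> B \<subseteq> V \<Longrightarrow> y \<in> V - B \<Longrightarrow> f (B \<union> {y}) - f B \<le> f (A \<union> {y}) - f A"
  using assms unfolding monotone_submodular_on_def by blast+

lemma monotone_submodular_onI:
  assumes "\<And>A B. A \<subseteq> B \<Longrightarrow> B \<subseteq> V \<Longrightarrow> f A \<le> f B"
    and "\<And>A B y. A \<subseteq> B \<Longrightarrow> B \<subseteq> V \<Longrightarrow> y \<in> V - B \<Longrightarrow> f (B \<union> {y}) - f B \<le> f (A \<union> {y}) - f A"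
  shows "monotone_submodular_on V f"
  using assms unfolding monotone_submodular_on_def by blast

lemma monotone_submodular_on_cong:
  assumes eq: "\<And>S. S \<subseteq> V \<Longrightarrow> f S = g S" and f: "monotone_submodular_on V f"
  shows "monotone_submodular_on V g"
proof (rule monotone_submodular_onI)
  fix A B assume AB: "A \<subseteq> B" "B \<subseteq> V"
  then have "A \<subseteq> V" by blast
  then show "g A \<le> g B" using monotone_submodular_on_mono[OF f AB] eq[OF \<open>A \<subseteq> V\<close>] eq[OF AB(2)] by simp
next
  fix A B y assume AB: "A \<subseteq> B" "B \<subseteq> V" and y: "y \<in> V - B"
  then have "A \<subseteq> V" "A \<union> {y} \<subseteq> V" "B \<union> {y} \<subseteq> V" by auto
  then show "g (B \<union> {y}) - g B \<le> g (A \<union> {y}) - g A"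
    using monotone_submodular_on_submod[OF f AB y] eq[OF AB(2)] by (simp only: eq)
qed

lemma monotone_submodular_on_sum:
  assumes "\<And>i. i \<in> I \<Longrightarrow> monotone_submodular_on V (f i)"
  shows "monotone_submodular_on V (\<lambda>S. \<Sum>i\<in>I. f i S)"
proof (rule monotone_submodular_onI)
  fix A B assume "A \<subseteq> B" "B \<subseteq> V"
  then show "(\<Sum>i\<in>I. f i A) \<le> (\<Sum>i\<in>I. f i B)"
    by (intro sum_mono monotone_submodular_on_mono[OF assms])
next
  fix A B y assume "A \<subseteq> B" "B \<subseteq> V" "y \<in> V - B"
  then have "(\<Sum>i\<in>I. f i (B \<union> {y}) - f i B) \<le> (\<Sum>i\<in>I. f i (A \<union> {y}) - f i A)"
    by (intro sum_mono monotone_submodular_on_submod[OF assms])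
  then show "(\<Sum>i\<in>I. f i (B \<union> {y})) - (\<Sum>i\<in>I. f i B) \<le> (\<Sum>i\<in>I. f i (A \<union> {y})) - (\<Sum>i\<in>I. f i A)"
    by (simp add: sum_subtractf)
qed

lemma monotone_submodular_on_integral:
  assumes int: "\<And>S. S \<subseteq> V \<Longrightarrow> integrable M (f S)"
    and pointwise: "\<And>x. x \<in> space M \<Longrightarrow> monotone_submodular_on V (\<lambda>S. f S x)"
  shows "monotone_submodular_on V (\<lambda>S. integral\<^sup>L M (f S))"
proof (rule monotone_submodular_onI)
  fix A B assume "A \<subseteq> B" "B \<subseteq> V"
  then show "integral\<^sup>L M (f A) \<le> integral\<^sup>L M (f B)"
    using int monotone_submodular_on_mono[OF pointwise] by (intro integral_mono) auto
next
  fix A B y assume AB: "A \<subseteq> B" "B \<subseteq> V" and y: "y \<in> V - B"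
  then have sub: "A \<subseteq> V" "A \<union> {y} \<subseteq> V" "B \<union> {y} \<subseteq> V" by auto
  have "integral\<^sup>L M (\<lambda>x. f (B \<union> {y}) x - f B x) \<le> integral\<^sup>L M (\<lambda>x. f (A \<union> {y}) x - f A x)"
  proof (rule integral_mono)
    fix x assume "x \<in> space M"
    show "f (B \<union> {y}) x - f B x \<le> f (A \<union> {y}) x - f A x"
      by (rule monotone_submodular_on_submod[OF pointwise[OF \<open>x \<in> space M\<close>] AB y])
  qed (use int sub AB in auto)
  then show "integral\<^sup>L M (f (B \<union> {y})) - integral\<^sup>L M (f B) \<le> integral\<^sup>L M (f (A \<union> {y})) - integral\<^sup>L M (f A)"
    using int[OF sub(3)] int[OF AB(2)] int[OF sub(2)] int[OF sub(1)] by simp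
qed

lemma submodular_union_gain_le_sum:
  assumes f: "monotone_submodular_on V f" and "finite T" "S \<subseteq> V" "T \<subseteq> V"
  shows "f (S \<union> T) - f S \<le> (\<Sum>w\<in>T. f (S \<union> {w}) - f S)"
  using \<open>finite T\<close> \<open>T \<subseteq> V\<close>
proof (induction T rule: finite_induct)
  case (insert a T)
  have "f (S \<union> T \<union> {a}) - f (S \<union> T) \<le> f (S \<union> {a}) - f S"
  proof (cases "a \<in> S")
    case True
    then show ?thesis by (simp add: insert_absorb)
  next
    case False
    then show ?thesis
      using insert by (intro monotone_submodular_on_submod[OF f]) (auto simp: \<open>S \<subseteq> V\<close>)
  qed
  moreover have "S \<union> insert a T = S \<union> T \<union> {a}" by auto
  ultimately show ?case using insert by simp
qed simp

section \<open>The greedy algorithm\<close>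

definition greedy_ratio :: "('a set \<Rightarrow> real) \<Rightarrow> ('a \<Rightarrow> real) \<Rightarrow> real \<Rightarrow> 'a set \<Rightarrow> 'a \<Rightarrow> real" where
  "greedy_ratio f c \<eta> S w = (min (f (S \<union> {w})) \<eta> - f S) / c w"

definition greedy_choice :: "'a set \<Rightarrow> ('a set \<Rightarrow> real) \<Rightarrow> ('a \<Rightarrow> real) \<Rightarrow> real \<Rightarrow> 'a set \<Rightarrow> 'a \<Rightarrow> bool" where
  "greedy_choice V f c \<eta> S u \<longleftrightarrow>
     u \<in> V - S \<and> (\<forall>w\<in>V - S. greedy_ratio f c \<eta> S w \<le> greedy_ratio f c \<eta> S u)"

lemma greedy_reach_stepI:
  "greedy_reach V f c \<eta> \<epsilon> S \<Longrightarrow> f S < \<eta> - \<epsilon> \<Longrightarrow> greedy_choice V f c \<eta> S u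
    \<Longrightarrow> greedy_reach V f c \<eta> \<epsilon> (S \<union> {u})"
  unfolding greedy_choice_def greedy_ratio_def by (blast intro: greedy_reach.step)

lemma greedy_reach_induct [consumes 1, case_names start step]:
  assumes "greedy_reach V f c \<eta> \<epsilon> S"
    and "P {}"
    and "\<And>S u. greedy_reach V f c \<eta> \<epsilon> S \<Longrightarrow> P S \<Longrightarrow> f S < \<eta> - \<epsilon> \<Longrightarrow> greedy_choice V f c \<eta> S u
           \<Longrightarrow> P (S \<union> {u})"
  shows "P S"
  using assms(1)
proof (induction rule: greedy_reach.induct)
  case (step S u)
  then show ?case using assms(3)[of S u] unfolding greedy_choice_def greedy_ratio_def by blast
qed (rule assms(2))

lemma greedy_reach_cases [consumes 1, case_names start step]:
  assumes "greedy_reach V f c \<eta> \<epsilon> S'"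
  obtains "S' = {}"
    | S u where "S' = S \<union> {u}" "greedy_reach V f c \<eta> \<epsilon> S" "f S < \<eta> - \<epsilon>" "greedy_choice V f c \<eta> S u"
  using assms by (cases rule: greedy_reach.cases) (auto simp: greedy_choice_def greedy_ratio_def)

lemma greedy_reach_subset: "greedy_reach V f c \<eta> \<epsilon> S \<Longrightarrow> S \<subseteq> V"
  by (induction rule: greedy_reach_induct) (auto simp: greedy_choice_def)

lemma greedy_choice_exists:
  assumes "finite V" "S \<subset> V"
  obtains u where "greedy_choice V f c \<eta> S u"
proof -
  let ?r = "greedy_ratio f c \<eta> S"
  have fin: "finite (V - S)" and ne: "V - S \<noteq> {}" using assms by auto
  then have "Max (?r ` (V - S)) \<in> ?r ` (V - S)" by simp
  then obtain u where "u \<in> V - S" "?r u = Max (?r ` (V - S))" by (metis imageE)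
  with fin have "greedy_choice V f c \<eta> S u" unfolding greedy_choice_def by simp
  then show thesis by (rule that)
qed

lemma greedy_output_exists:
  assumes "finite V" and "\<not> f V < \<eta> - \<epsilon>"
  shows "\<exists>S. greedy_output V f c \<eta> \<epsilon> S"
proof -
  have "\<exists>S'. greedy_output V f c \<eta> \<epsilon> S'" if "greedy_reach V f c \<eta> \<epsilon> S" for S
    using that
  proof (induction "card (V - S)" arbitrary: S rule: less_induct)
    case less
    show ?case
    proof (cases "f S < \<eta> - \<epsilon>")
      case False
      then show ?thesis using less.prems greedy_output_def by blast
    next
      case True
      then have "S \<subset> V" using assms(2) greedy_reach_subset[OF less.prems] by blast
      then obtain u where u: "greedy_choice V f c \<eta> S u" using greedy_choice_exists[OF assms(1)] by blast
      have "greedy_reach V f c \<eta> \<epsilon> (S \<union> {u})" by (rule greedy_reach_stepI[OF less.prems True u])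
      moreover have "card (V - (S \<union> {u})) < card (V - S)"
        using u assms(1) by (intro psubset_card_mono) (auto simp: greedy_choice_def)
      ultimately show ?thesis using less.hyps by blast
    qed
  qed
  then show ?thesis using greedy_reach.start by blast
qed

lemma set_cost_insert: "finite S \<Longrightarrow> u \<notin> S \<Longrightarrow> set_cost c (insert u S) = set_cost c S + c u"
  unfolding set_cost_def by simp

lemma set_cost_nonneg: "\<forall>v\<in>V. 0 < c v \<Longrightarrow> T \<subseteq> V \<Longrightarrow> 0 \<le> set_cost c T"
  unfolding set_cost_def by (intro sum_nonneg) (auto intro: less_imp_le)

lemma set_cost_pos: "finite T \<Longrightarrow> T \<noteq> {} \<Longrightarrow> \<forall>v\<in>T. 0 < c v \<Longrightarrow> 0 < set_cost c T"
  unfolding set_cost_def by (intro sum_pos) auto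

lemma greedy_gain_ge_residual:
  assumes f: "monotone_submodular_on V f" and "finite V" and cost: "\<forall>v\<in>V. 0 < c v"
    and S: "S \<subseteq> V" and T: "T \<subseteq> V" "\<eta> \<le> f T" and "f S < \<eta>"
  shows "\<exists>w\<in>V - S. (\<eta> - f S) / set_cost c T \<le> greedy_ratio f c \<eta> S w"
proof (rule ccontr)
  define C where "C = set_cost c T"
  define d where "d = \<eta> - f S"
  assume "\<not> ?thesis"
  then have small: "greedy_ratio f c \<eta> S w < d / C" if "w \<in> V - S" for w
    using that unfolding C_def d_def by force
  have finT: "finite T" using T \<open>finite V\<close> finite_subset by blast
  have "T \<noteq> {}" using T \<open>f S < \<eta>\<close> monotone_submodular_on_mono[OF f, of "{}" S] S by auto
  then have "0 < C" unfolding C_def using finT T cost by (intro set_cost_pos) auto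
  have "d > 0" using \<open>f S < \<eta>\<close> d_def by simp
  have cw: "0 < c w" "c w \<le> C" if "w \<in> T" for w
    using that T cost finT unfolding C_def set_cost_def by (auto intro: member_le_sum less_imp_le)
  have gain: "f (S \<union> {w}) - f S < c w * d / C" if "w \<in> T" for w
  proof (cases "w \<in> S")
    case True
    then show ?thesis using cw[OF that] \<open>0 < C\<close> \<open>d > 0\<close> by (simp add: insert_absorb)
  next
    case False
    then have r: "greedy_ratio f c \<eta> S w < d / C" using small that T by blast
    have "d / C \<le> d / c w" using cw[OF that] \<open>d > 0\<close> by (intro divide_left_mono) auto
    have "f (S \<union> {w}) < \<eta>"
    proof (rule ccontr)
      assume "\<not> f (S \<union> {w}) < \<eta>"
      then have "greedy_ratio f c \<eta> S w = d / c w" unfolding greedy_ratio_def d_def by simp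
      then show False using r \<open>d / C \<le> d / c w\<close> by simp
    qed
    then have "(f (S \<union> {w}) - f S) / c w < d / C" using r unfolding greedy_ratio_def by simp
    then show ?thesis using cw[OF that] \<open>0 < C\<close> by (simp add: field_simps)
  qed
  have "d \<le> f (S \<union> T) - f S"
    using T S monotone_submodular_on_mono[OF f, of T "S \<union> T"] unfolding d_def by auto
  also have "\<dots> \<le> (\<Sum>w\<in>T. f (S \<union> {w}) - f S)"
    by (rule submodular_union_gain_le_sum[OF f finT S T(1)])
  also have "\<dots> < (\<Sum>w\<in>T. c w * d / C)"
    using finT \<open>T \<noteq> {}\<close> gain by (rule sum_strict_mono)
  also have "\<dots> = d"
    using \<open>0 < C\<close> unfolding C_def set_cost_def by (simp add: sum_distrib_right[symmetric] sum_divide_distrib[symmetric])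
  finally show False by simp
qed

locale approx_greedy_run =
  fixes V :: "'a set" and \<sigma> f :: "'a set \<Rightarrow> real" and c :: "'a \<Rightarrow> real" and \<eta> \<epsilon> :: real
  assumes finite_V: "finite V"
    and monotone_submodular: "monotone_submodular_on V \<sigma>"
    and nonneg_empty: "0 \<le> \<sigma> {}"
    and cost_pos: "\<forall>v\<in>V. 0 < c v"
    and eps_pos: "0 < \<epsilon>" and eps_less: "\<epsilon> < \<eta>"
    and stop_sound: "\<And>S. S \<subseteq> V \<Longrightarrow> f S < \<eta> - \<epsilon> \<Longrightarrow> \<sigma> S \<le> \<eta> - \<epsilon>"
    and choice_sound: "\<And>S u. S \<subseteq> V \<Longrightarrow> greedy_choice V f c \<eta> S u \<Longrightarrow> greedy_choice V \<sigma> c \<eta> S u"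
begin

lemma step_gain:
  assumes S: "greedy_reach V f c \<eta> \<epsilon> S" "f S < \<eta> - \<epsilon>" "greedy_choice V f c \<eta> S u"
    and T: "T \<subseteq> V" "\<eta> \<le> \<sigma> T"
  shows "0 < set_cost c T" and "(\<eta> - \<sigma> S) / set_cost c T \<le> greedy_ratio \<sigma> c \<eta> S u"
proof -
  have SV: "S \<subseteq> V" by (rule greedy_reach_subset[OF S(1)])
  have "\<sigma> S < \<eta>" using stop_sound[OF SV S(2)] eps_pos by simp
  then obtain w where w: "w \<in> V - S" "(\<eta> - \<sigma> S) / set_cost c T \<le> greedy_ratio \<sigma> c \<eta> S w"
    using greedy_gain_ge_residual[OF monotone_submodular finite_V cost_pos SV T] by blast
  then show "(\<eta> - \<sigma> S) / set_cost c T \<le> greedy_ratio \<sigma> c \<eta> S u"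
    using choice_sound[OF SV S(3)] unfolding greedy_choice_def by force
  have "T \<noteq> {}" using T \<open>\<sigma> S < \<eta>\<close> monotone_submodular_on_mono[OF monotone_submodular, of "{}" S] SV by auto
  then show "0 < set_cost c T"
    using T finite_V cost_pos by (intro set_cost_pos) (auto intro: finite_subset)
qed

lemma residual_exp_bound:
  assumes "greedy_reach V f c \<eta> \<epsilon> S" and T: "T \<subseteq> V" "\<eta> \<le> \<sigma> T"
  shows "\<eta> - \<sigma> S \<le> \<eta> * exp (- set_cost c S / set_cost c T)"
  using assms(1)
proof (induction rule: greedy_reach_induct)
  case start
  then show ?case using nonneg_empty by (simp add: set_cost_def)
next
  case (step S u)
  define C where "C = set_cost c T"
  define d where "d = \<eta> - \<sigma> S"
  have SV: "S \<subseteq> V" by (rule greedy_reach_subset[OF step.hyps(1)])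
  have u: "u \<in> V - S" using step.hyps(3) unfolding greedy_choice_def by blast
  have "0 < C" and gain: "d / C \<le> greedy_ratio \<sigma> c \<eta> S u"
    using step_gain[OF step.hyps(1,2,3) T] unfolding C_def d_def by auto
  have "0 < c u" using cost_pos u by blast
  have "0 \<le> d" using stop_sound[OF SV step.hyps(2)] eps_pos unfolding d_def by simp
  have "d / C * c u \<le> min (\<sigma> (S \<union> {u})) \<eta> - \<sigma> S"
    using gain \<open>0 < c u\<close> unfolding greedy_ratio_def by (simp add: pos_le_divide_eq)
  then have "\<eta> - \<sigma> (S \<union> {u}) \<le> d * (1 - c u / C)" unfolding d_def by (simp add: algebra_simps)
  also have "\<dots> \<le> d * exp (- (c u / C))"
    using \<open>0 \<le> d\<close> exp_minus_ge[of "c u / C"] by (intro mult_left_mono) auto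
  also have "\<dots> \<le> \<eta> * exp (- set_cost c S / C) * exp (- (c u / C))"
    using step.IH unfolding C_def d_def by (intro mult_right_mono) auto
  also have "\<dots> = \<eta> * exp (- (set_cost c S + c u) / C)"
    by (simp add: exp_add[symmetric] add_divide_distrib diff_divide_distrib)
  also have "set_cost c S + c u = set_cost c (S \<union> {u})"
    using SV u finite_V by (simp add: set_cost_insert finite_subset[OF SV])
  finally show ?case unfolding C_def .
qed

theorem cost_bound:
  assumes out: "greedy_output V f c \<eta> \<epsilon> S" and T: "T \<subseteq> V" "\<eta> \<le> \<sigma> T"
  shows "set_cost c S \<le> (1 + ln (\<eta> / \<epsilon>)) * set_cost c T"
proof -
  have "0 < ln (\<eta> / \<epsilon>)" using eps_pos eps_less by simp
  have "greedy_reach V f c \<eta> \<epsilon> S" using out unfolding greedy_output_def by blast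
  then show ?thesis
  proof (cases rule: greedy_reach_cases)
    case start
    then show ?thesis using set_cost_nonneg[OF cost_pos T(1)] \<open>0 < ln (\<eta> / \<epsilon>)\<close> by (simp add: set_cost_def)
  next
    case (step S0 u)
    define C where "C = set_cost c T"
    have SV: "S0 \<subseteq> V" by (rule greedy_reach_subset[OF step(2)])
    have u: "u \<in> V - S0" using step(4) unfolding greedy_choice_def by blast
    have "0 < C" and gain: "(\<eta> - \<sigma> S0) / C \<le> greedy_ratio \<sigma> c \<eta> S0 u"
      using step_gain[OF step(2-4) T] unfolding C_def by auto
    have "0 < c u" using cost_pos u by blast
    have residual: "\<epsilon> \<le> \<eta> - \<sigma> S0" using stop_sound[OF SV step(3)] by simp
    txt \<open>The last element cannot cost more than \<open>T\<close>: its ratio is at most \<open>(\<eta> - \<sigma> S0) / c u\<close>.\<close>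
    have "greedy_ratio \<sigma> c \<eta> S0 u \<le> (\<eta> - \<sigma> S0) / c u"
      unfolding greedy_ratio_def using \<open>0 < c u\<close> by (intro divide_right_mono) auto
    with gain have "(\<eta> - \<sigma> S0) / C \<le> (\<eta> - \<sigma> S0) / c u" by (rule order_trans)
    moreover have "0 < \<eta> - \<sigma> S0" using residual eps_pos by linarith
    ultimately have "c u \<le> C" using \<open>0 < c u\<close> \<open>0 < C\<close> by (meson frac_less2 linorder_not_le order_refl)
    have "\<epsilon> \<le> \<eta> * exp (- set_cost c S0 / C)"
      using residual residual_exp_bound[OF step(2) T] unfolding C_def by linarith
    then have "ln \<epsilon> \<le> ln (\<eta> * exp (- set_cost c S0 / C))" using eps_pos by simp
    also have "\<dots> = ln \<eta> - set_cost c S0 / C" using eps_pos eps_less by (simp add: ln_mult)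
    finally have "set_cost c S0 / C \<le> ln (\<eta> / \<epsilon>)" using eps_pos eps_less by (simp add: ln_div)
    then have "set_cost c S0 \<le> C * ln (\<eta> / \<epsilon>)"
      using \<open>0 < C\<close> by (simp add: pos_divide_le_eq mult.commute)
    moreover have "set_cost c S = set_cost c S0 + c u"
      using step(1) SV u finite_V by (simp add: set_cost_insert finite_subset[OF SV])
    ultimately show ?thesis using \<open>c u \<le> C\<close> unfolding C_def by argo
  qed
qed

end

section \<open>Approximate values\<close>

definition approx_below :: "'a set \<Rightarrow> real \<Rightarrow> ('a set \<Rightarrow> real) \<Rightarrow> ('a set \<Rightarrow> real) \<Rightarrow> bool" where
  "approx_below V \<delta> \<sigma> \<sigma>' \<longleftrightarrow> (\<forall>S\<subseteq>V. (1 - \<delta>) * \<sigma> S \<le> \<sigma>' S \<and> \<sigma>' S \<le> \<sigma> S)"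

lemma finite_pos_lower_bound:
  assumes "finite X" "\<forall>x\<in>X. (0::real) < x"
  obtains d where "0 < d" "\<forall>x\<in>X. d \<le> x"
proof
  show "0 < Min (insert 1 X)" and "\<forall>x\<in>X. Min (insert 1 X) \<le> x" using assms by auto
qed

lemma finite_min_gap:
  assumes "finite (R :: real set)"
  obtains G where "0 < G" "\<forall>a\<in>R. \<forall>b\<in>R. a < b \<longrightarrow> G \<le> b - a"
proof -
  let ?D = "{b - a |a b. a \<in> R \<and> b \<in> R \<and> a < b}"
  have "?D \<subseteq> (\<lambda>(a, b). b - a) ` (R \<times> R)" by auto
  then have "finite ?D" by (rule finite_subset) (use assms in simp)
  then obtain G where "0 < G" "\<forall>x\<in>?D. G \<le> x" by (rule finite_pos_lower_bound) auto
  then show thesis by (intro that) blast+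
qed

lemma maximizer_stable:
  fixes f g :: "'b \<Rightarrow> real"
  assumes gap: "\<forall>a\<in>R. \<forall>b\<in>R. a < b \<longrightarrow> G \<le> b - a" and "f ` X \<subseteq> R"
    and close: "\<forall>x\<in>X. \<bar>g x - f x\<bar> < G / 2"
    and u: "u \<in> X" "\<forall>w\<in>X. g w \<le> g u"
  shows "\<forall>w\<in>X. f w \<le> f u"
proof
  fix w assume w: "w \<in> X"
  show "f w \<le> f u"
  proof (rule ccontr)
    assume "\<not> f w \<le> f u"
    moreover have "f w \<in> R" "f u \<in> R" using \<open>f ` X \<subseteq> R\<close> u(1) w by auto
    ultimately have "G \<le> f w - f u" using gap by auto
    moreover have "\<bar>g w - f w\<bar> < G / 2" "\<bar>g u - f u\<bar> < G / 2" "g w \<le> g u"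
      using close u w by auto
    ultimately show False by linarith
  qed
qed

lemma greedy_ratio_perturbation:
  assumes "\<bar>f' (S \<union> {x}) - f (S \<union> {x})\<bar> \<le> e" "\<bar>f' S - f S\<bar> \<le> e" "0 < c x"
  shows "\<bar>greedy_ratio f' c \<eta> S x - greedy_ratio f c \<eta> S x\<bar> \<le> 2 * e / c x"
proof -
  have "\<bar>min (f' (S \<union> {x})) \<eta> - min (f (S \<union> {x})) \<eta>\<bar> \<le> e"
    using assms(1) by (auto simp: min_def abs_le_iff)
  then have "\<bar>(min (f' (S \<union> {x})) \<eta> - f' S) - (min (f (S \<union> {x})) \<eta> - f S)\<bar> \<le> 2 * e"
    using assms(2) by linarith
  then show ?thesis
    using assms(3) unfolding greedy_ratio_def
    by (simp add: diff_divide_distrib[symmetric] divide_right_mono)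
qed

lemma greedy_ratio_approx_error:
  assumes \<sigma>: "monotone_submodular_on V \<sigma>" and approx: "approx_below V \<delta> \<sigma> \<sigma>'" and "0 \<le> \<delta>"
    and "S \<subseteq> V" "x \<in> V" "0 < c x"
  shows "\<bar>greedy_ratio \<sigma>' c \<eta> S x - greedy_ratio \<sigma> c \<eta> S x\<bar> \<le> 2 * (\<delta> * \<sigma> V) / c x"
proof (rule greedy_ratio_perturbation)
  have err: "\<bar>\<sigma>' X - \<sigma> X\<bar> \<le> \<delta> * \<sigma> V" if "X \<subseteq> V" for X
  proof -
    have "(1 - \<delta>) * \<sigma> X \<le> \<sigma>' X" "\<sigma>' X \<le> \<sigma> X" using approx that unfolding approx_below_def by auto
    moreover have "\<delta> * \<sigma> X \<le> \<delta> * \<sigma> V"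
      using monotone_submodular_on_mono[OF \<sigma> that subset_refl] \<open>0 \<le> \<delta>\<close> by (rule mult_left_mono)
    ultimately show ?thesis by (simp add: abs_le_iff left_diff_distrib)
  qed
  show "\<bar>\<sigma>' (S \<union> {x}) - \<sigma> (S \<union> {x})\<bar> \<le> \<delta> * \<sigma> V" "\<bar>\<sigma>' S - \<sigma> S\<bar> \<le> \<delta> * \<sigma> V"
    using assms(4,5) by (auto intro: err)
qed (rule \<open>0 < c x\<close>)

lemma threshold_robust:
  fixes \<sigma> :: "'a set \<Rightarrow> real"
  assumes "finite V" "0 \<le> t"
  obtains \<delta>0 where "0 < \<delta>0" "\<And>\<delta> S. \<delta> \<le> \<delta>0 \<Longrightarrow> S \<subseteq> V \<Longrightarrow> t < \<sigma> S \<Longrightarrow> t < (1 - \<delta>) * \<sigma> S"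
proof -
  let ?X = "(\<lambda>S. (\<sigma> S - t) / \<sigma> S) ` {S. S \<subseteq> V \<and> t < \<sigma> S}"
  have "finite ?X" using assms(1) by simp
  then obtain d where "0 < d" and d: "\<forall>x\<in>?X. d \<le> x"
    by (rule finite_pos_lower_bound) (use assms(2) in auto)
  show thesis
  proof (rule that[of "d / 2"])
    fix \<delta> S assume "\<delta> \<le> d / 2" "S \<subseteq> V" "t < \<sigma> S"
    then have "0 < \<sigma> S" and "d \<le> (\<sigma> S - t) / \<sigma> S" using assms(2) d by auto
    then have "d * \<sigma> S \<le> \<sigma> S - t" by (simp add: pos_le_divide_eq)
    moreover have "\<delta> * \<sigma> S \<le> d / 2 * \<sigma> S" using \<open>\<delta> \<le> d / 2\<close> \<open>0 < \<sigma> S\<close> by (intro mult_right_mono) auto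
    moreover have "d / 2 * \<sigma> S < d * \<sigma> S" using \<open>0 < d\<close> \<open>0 < \<sigma> S\<close> by simp
    ultimately show "t < (1 - \<delta>) * \<sigma> S" by (simp add: algebra_simps)
  qed (use \<open>0 < d\<close> in simp)
qed

text \<open>The greedy ratios of \<open>\<sigma>\<close> take finitely many values, so they are separated by a positive
  gap; once the approximation error of the ratios is below half this gap, every greedy choice
  for the approximation is also a greedy choice for \<open>\<sigma>\<close>.\<close>

lemma greedy_choice_robust:
  assumes "finite V" and \<sigma>: "monotone_submodular_on V \<sigma>" "0 \<le> \<sigma> {}" and cost: "\<forall>v\<in>V. 0 < c v"
  obtains \<delta>0 where "0 < \<delta>0"
    "\<And>\<delta> \<sigma>' S u. 0 \<le> \<delta> \<Longrightarrow> \<delta> \<le> \<delta>0 \<Longrightarrow> approx_below V \<delta> \<sigma> \<sigma>' \<Longrightarrow> S \<subseteq> V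
      \<Longrightarrow> greedy_choice V \<sigma>' c \<eta> S u \<Longrightarrow> greedy_choice V \<sigma> c \<eta> S u"
proof -
  let ?R = "(\<lambda>(S, w). greedy_ratio \<sigma> c \<eta> S w) ` (Pow V \<times> V)"
  have "finite ?R" using \<open>finite V\<close> by simp
  then obtain G where "0 < G" and gap: "\<forall>a\<in>?R. \<forall>b\<in>?R. a < b \<longrightarrow> G \<le> b - a"
    by (rule finite_min_gap)
  have "finite (c ` V)" "\<forall>x\<in>c ` V. 0 < x" using \<open>finite V\<close> cost by auto
  then obtain cm where "0 < cm" and cm: "\<forall>x\<in>c ` V. cm \<le> x"
    by (rule finite_pos_lower_bound)
  define M where "M = \<sigma> V"
  have "0 \<le> M" using monotone_submodular_on_mono[OF \<sigma>(1), of "{}" V] \<sigma>(2) unfolding M_def by simp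
  show thesis
  proof (rule that[of "G * cm / (8 * (M + 1))"])
    show "0 < G * cm / (8 * (M + 1))" using \<open>0 < G\<close> \<open>0 < cm\<close> \<open>0 \<le> M\<close> by simp
    fix \<delta> \<sigma>' S u
    assume \<delta>: "0 \<le> \<delta>" "\<delta> \<le> G * cm / (8 * (M + 1))" and approx: "approx_below V \<delta> \<sigma> \<sigma>'"
      and S: "S \<subseteq> V" and u: "greedy_choice V \<sigma>' c \<eta> S u"
    have "0 \<le> \<delta> * M" using \<delta>(1) \<open>0 \<le> M\<close> by simp
    have "8 * (\<delta> * M) \<le> \<delta> * (8 * (M + 1))" using \<delta>(1) \<open>0 \<le> M\<close> by (simp add: algebra_simps)
    also have "\<dots> \<le> G * cm" using \<delta>(2) \<open>0 \<le> M\<close> by (simp add: pos_le_divide_eq)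
    finally have "8 * (\<delta> * M) \<le> G * cm" .
    have close: "\<forall>x\<in>V - S. \<bar>greedy_ratio \<sigma>' c \<eta> S x - greedy_ratio \<sigma> c \<eta> S x\<bar> < G / 2"
    proof
      fix x assume "x \<in> V - S"
      then have "0 < c x" "cm \<le> c x" using cost cm by auto
      have "\<bar>greedy_ratio \<sigma>' c \<eta> S x - greedy_ratio \<sigma> c \<eta> S x\<bar> \<le> 2 * (\<delta> * M) / c x"
        unfolding M_def using \<open>x \<in> V - S\<close> \<open>0 < c x\<close>
        by (intro greedy_ratio_approx_error[OF \<sigma>(1) approx \<delta>(1) S]) auto
      also have "\<dots> \<le> 2 * (\<delta> * M) / cm"
        using \<open>0 < cm\<close> \<open>cm \<le> c x\<close> \<open>0 \<le> \<delta> * M\<close> by (intro divide_left_mono) simp_all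
      also have "\<dots> \<le> G / 4" using \<open>8 * (\<delta> * M) \<le> G * cm\<close> \<open>0 < cm\<close> by (auto simp: field_simps)
      finally show "\<bar>greedy_ratio \<sigma>' c \<eta> S x - greedy_ratio \<sigma> c \<eta> S x\<bar> < G / 2" using \<open>0 < G\<close> by linarith
    qed
    have "greedy_ratio \<sigma> c \<eta> S ` (V - S) \<subseteq> ?R" using S by force
    moreover have u_max: "u \<in> V - S" "\<forall>w\<in>V - S. greedy_ratio \<sigma>' c \<eta> S w \<le> greedy_ratio \<sigma>' c \<eta> S u"
      using u unfolding greedy_choice_def by blast+
    ultimately show "greedy_choice V \<sigma> c \<eta> S u"
      using maximizer_stable[OF gap _ close u_max] unfolding greedy_choice_def by blast
  qed
qed

theorem greedy_mintss_approx_bound: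
  assumes "finite V" and \<sigma>: "monotone_submodular_on V \<sigma>" "0 \<le> \<sigma> {}" and cost: "\<forall>v\<in>V. 0 < c v"
    and eps: "0 < \<epsilon>" "\<epsilon> < \<eta>" and "\<eta> \<le> \<sigma> V"
  obtains \<delta> where "0 < \<delta>" "\<delta> < 1"
    "\<And>\<sigma>'. approx_below V \<delta> \<sigma> \<sigma>' \<Longrightarrow> \<exists>S. greedy_output V \<sigma>' c \<eta> \<epsilon> S"
    "\<And>\<sigma>' S T. approx_below V \<delta> \<sigma> \<sigma>' \<Longrightarrow> greedy_output V \<sigma>' c \<eta> \<epsilon> S \<Longrightarrow> T \<subseteq> V \<Longrightarrow> \<eta> \<le> \<sigma> T
      \<Longrightarrow> set_cost c S \<le> (1 + ln (\<eta> / \<epsilon>)) * set_cost c T"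
proof -
  have "0 \<le> \<eta> - \<epsilon>" using eps by simp
  obtain \<delta>1 where "0 < \<delta>1"
    and threshold: "\<And>\<delta> S. \<delta> \<le> \<delta>1 \<Longrightarrow> S \<subseteq> V \<Longrightarrow> \<eta> - \<epsilon> < \<sigma> S \<Longrightarrow> \<eta> - \<epsilon> < (1 - \<delta>) * \<sigma> S"
    using threshold_robust[OF \<open>finite V\<close> \<open>0 \<le> \<eta> - \<epsilon>\<close>, of \<sigma>] by blast
  obtain \<delta>2 where "0 < \<delta>2"
    and choice: "\<And>\<delta> \<sigma>' S u. 0 \<le> \<delta> \<Longrightarrow> \<delta> \<le> \<delta>2 \<Longrightarrow> approx_below V \<delta> \<sigma> \<sigma>' \<Longrightarrow> S \<subseteq> V
      \<Longrightarrow> greedy_choice V \<sigma>' c \<eta> S u \<Longrightarrow> greedy_choice V \<sigma> c \<eta> S u"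
    using greedy_choice_robust[OF \<open>finite V\<close> \<sigma> cost, of \<eta>] by blast
  define \<delta> where "\<delta> = min (1 / 2) (min \<delta>1 \<delta>2)"
  have \<delta>: "0 < \<delta>" "\<delta> < 1" "\<delta> \<le> \<delta>1" "\<delta> \<le> \<delta>2" using \<open>0 < \<delta>1\<close> \<open>0 < \<delta>2\<close> unfolding \<delta>_def by auto
  have lower: "(1 - \<delta>) * \<sigma> S \<le> \<sigma>' S" if "approx_below V \<delta> \<sigma> \<sigma>'" "S \<subseteq> V" for \<sigma>' S
    using that unfolding approx_below_def by blast
  have run: "approx_greedy_run V \<sigma> \<sigma>' c \<eta> \<epsilon>" if approx: "approx_below V \<delta> \<sigma> \<sigma>'" for \<sigma>'
  proof (unfold_locales)
    fix S assume S: "S \<subseteq> V" and "\<sigma>' S < \<eta> - \<epsilon>"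
    show "\<sigma> S \<le> \<eta> - \<epsilon>"
    proof (rule ccontr)
      assume "\<not> \<sigma> S \<le> \<eta> - \<epsilon>"
      then have "\<eta> - \<epsilon> < (1 - \<delta>) * \<sigma> S" using threshold[OF \<delta>(3) S] by simp
      then show False using lower[OF approx S] \<open>\<sigma>' S < \<eta> - \<epsilon>\<close> by simp
    qed
  next
    fix S u assume "S \<subseteq> V" "greedy_choice V \<sigma>' c \<eta> S u"
    then show "greedy_choice V \<sigma> c \<eta> S u" using choice[OF _ \<delta>(4) approx] \<delta>(1) by simp
  qed (fact assms)+
  show thesis
  proof (rule that[OF \<delta>(1,2)])
    fix \<sigma>' assume approx: "approx_below V \<delta> \<sigma> \<sigma>'"
    have "\<eta> - \<epsilon> < (1 - \<delta>) * \<sigma> V" using threshold[OF \<delta>(3) subset_refl] \<open>\<eta> \<le> \<sigma> V\<close> eps by simp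
    then have "\<not> \<sigma>' V < \<eta> - \<epsilon>" using lower[OF approx subset_refl] by simp
    then show "\<exists>S. greedy_output V \<sigma>' c \<eta> \<epsilon> S" by (rule greedy_output_exists[OF \<open>finite V\<close>])
  next
    fix \<sigma>' S T assume "approx_below V \<delta> \<sigma> \<sigma>'" "greedy_output V \<sigma>' c \<eta> \<epsilon> S" "T \<subseteq> V" "\<eta> \<le> \<sigma> T"
    then show "set_cost c S \<le> (1 + ln (\<eta> / \<epsilon>)) * set_cost c T"
      using approx_greedy_run.cost_bound[OF run] by blast
  qed
qed

section \<open>Independent cascade\<close>

definition ic_active :: "'a set \<Rightarrow> ('a \<times> 'a) set \<Rightarrow> 'a set \<Rightarrow> nat \<Rightarrow> 'a set" where
  "ic_active V L S t = fst (ic_state V L S t)"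

definition ic_frontier :: "'a set \<Rightarrow> ('a \<times> 'a) set \<Rightarrow> 'a set \<Rightarrow> nat \<Rightarrow> 'a set" where
  "ic_frontier V L S t = snd (ic_state V L S t)"

lemma ic_active_0 [simp]: "ic_active V L S 0 = S"
  and ic_frontier_0 [simp]: "ic_frontier V L S 0 = S"
  unfolding ic_active_def ic_frontier_def by simp_all

lemma ic_frontier_Suc:
  "ic_frontier V L S (Suc t) = {u \<in> V - ic_active V L S t. \<exists>v\<in>ic_frontier V L S t. (v, u) \<in> L}"
  and ic_active_Suc: "ic_active V L S (Suc t) = ic_active V L S t \<union> ic_frontier V L S (Suc t)"
  unfolding ic_active_def ic_frontier_def by (simp_all add: case_prod_beta Let_def)

lemma ic_frontier_subset_active: "ic_frontier V L S t \<subseteq> ic_active V L S t"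
  by (cases t) (auto simp: ic_active_Suc)

lemma ic_active_mono: "i \<le> j \<Longrightarrow> ic_active V L S i \<subseteq> ic_active V L S j"
  by (rule lift_Suc_mono_le[of "ic_active V L S"]) (auto simp: ic_active_Suc)

lemma ic_active_in_frontier: "v \<in> ic_active V L S t \<Longrightarrow> \<exists>i\<le>t. v \<in> ic_frontier V L S i"
  by (induction t) (auto simp: ic_active_Suc le_Suc_eq)

lemma ic_active_step:
  assumes "v \<in> ic_active V L S t" "(v, u) \<in> L" "u \<in> V"
  shows "u \<in> ic_active V L S (Suc t)"
proof -
  obtain i where "i \<le> t" "v \<in> ic_frontier V L S i" using ic_active_in_frontier[OF assms(1)] by blast
  then have "u \<in> ic_active V L S (Suc i)" using assms(2,3) by (auto simp: ic_active_Suc ic_frontier_Suc)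
  then show ?thesis using ic_active_mono[of "Suc i" "Suc t" V L S] \<open>i \<le> t\<close> by auto
qed

definition live_reach :: "'a set \<Rightarrow> ('a \<times> 'a) set \<Rightarrow> 'a \<Rightarrow> 'a set" where
  "live_reach V L s = {u. (s, u) \<in> (L \<inter> UNIV \<times> V)\<^sup>*}"

lemma live_reach_refl: "s \<in> live_reach V L s"
  unfolding live_reach_def by simp

lemma live_reach_step: "v \<in> live_reach V L s \<Longrightarrow> (v, u) \<in> L \<Longrightarrow> u \<in> V \<Longrightarrow> u \<in> live_reach V L s"
  unfolding live_reach_def by (simp add: rtrancl.rtrancl_into_rtrancl)

lemma ic_active_subset_live_reach: "ic_active V L S t \<subseteq> (\<Union>s\<in>S. live_reach V L s)"
proof (induction t)
  case 0
  show ?case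
  proof
    fix x assume "x \<in> ic_active V L S 0"
    then have "x \<in> S" by simp
    then show "x \<in> (\<Union>s\<in>S. live_reach V L s)" by (rule UN_I) (rule live_reach_refl)
  qed
next
  case (Suc t)
  have "ic_frontier V L S (Suc t) \<subseteq> (\<Union>s\<in>S. live_reach V L s)"
  proof
    fix u assume "u \<in> ic_frontier V L S (Suc t)"
    then obtain v where v: "v \<in> ic_frontier V L S t" "(v, u) \<in> L" "u \<in> V"
      by (auto simp: ic_frontier_Suc)
    then obtain s where "s \<in> S" "v \<in> live_reach V L s"
      using ic_frontier_subset_active[of V L S t] Suc.IH by blast
    then show "u \<in> (\<Union>s\<in>S. live_reach V L s)" using live_reach_step[OF _ v(2,3)] by blast
  qed
  then show ?case using Suc.IH by (simp add: ic_active_Suc)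
qed

lemma live_reach_subset_ic_final:
  assumes "s \<in> S"
  shows "live_reach V L s \<subseteq> ic_final V L S"
proof
  fix u assume "u \<in> live_reach V L s"
  then have "(s, u) \<in> (L \<inter> UNIV \<times> V)\<^sup>*" unfolding live_reach_def by simp
  then have "\<exists>t. u \<in> ic_active V L S t"
  proof (induction rule: rtrancl_induct)
    case base
    then show ?case using assms by (auto intro: exI[of _ 0])
  next
    case (step y z)
    then obtain t where "y \<in> ic_active V L S t" by blast
    then have "z \<in> ic_active V L S (Suc t)" using step.hyps(2) by (auto intro: ic_active_step)
    then show ?case by blast
  qed
  then show "u \<in> ic_final V L S" unfolding ic_final_def ic_active_def by blast
qed

lemma ic_final_eq_UN_live_reach: "ic_final V L S = (\<Union>s\<in>S. live_reach V L s)"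
proof
  show "ic_final V L S \<subseteq> (\<Union>s\<in>S. live_reach V L s)"
    unfolding ic_final_def ic_active_def[symmetric] using ic_active_subset_live_reach by (rule UN_least)
  show "(\<Union>s\<in>S. live_reach V L s) \<subseteq> ic_final V L S"
    by (rule UN_least) (rule live_reach_subset_ic_final)
qed

lemma live_reach_subset: "live_reach V L s \<subseteq> insert s V"
proof
  fix u assume "u \<in> live_reach V L s"
  then have "(s, u) \<in> (L \<inter> UNIV \<times> V)\<^sup>*" unfolding live_reach_def by simp
  then show "u \<in> insert s V" by (induction rule: rtrancl_induct) auto
qed

lemma ic_final_subset:
  assumes "S \<subseteq> V"
  shows "ic_final V L S \<subseteq> V"
proof
  fix u assume "u \<in> ic_final V L S"
  then obtain s where "s \<in> S" "u \<in> live_reach V L s" unfolding ic_final_eq_UN_live_reach by blast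
  then show "u \<in> V" using live_reach_subset[of V L s] assms by blast
qed

lemma ic_final_superset: "S \<subseteq> ic_final V L S"
proof
  fix s assume "s \<in> S"
  then show "s \<in> ic_final V L S" unfolding ic_final_eq_UN_live_reach by (rule UN_I) (rule live_reach_refl)
qed

lemma finite_ic_final: "finite V \<Longrightarrow> S \<subseteq> V \<Longrightarrow> finite (ic_final V L S)"
  by (rule finite_subset[OF ic_final_subset])

lemma finite_live_reach: "finite V \<Longrightarrow> finite (live_reach V L s)"
  by (rule finite_subset[OF live_reach_subset]) simp

lemma ic_final_mono: "A \<subseteq> B \<Longrightarrow> ic_final V L A \<subseteq> ic_final V L B"
  unfolding ic_final_eq_UN_live_reach by blast

lemma card_ic_final_monotone_submodular:
  assumes "finite V"
  shows "monotone_submodular_on V (\<lambda>S. real (card (ic_final V L S)))"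
proof (rule monotone_submodular_onI)
  fix A B assume "A \<subseteq> B" "B \<subseteq> V"
  then show "real (card (ic_final V L A)) \<le> real (card (ic_final V L B))"
    using card_mono[OF finite_ic_final[OF assms \<open>B \<subseteq> V\<close>] ic_final_mono[OF \<open>A \<subseteq> B\<close>]] by simp
next
  fix A B y assume AB: "A \<subseteq> B" "B \<subseteq> V" and y: "y \<in> V - B"
  txt \<open>Adding \<open>y\<close> to a seed set \<open>X\<close> gains exactly the nodes of \<open>live_reach V L y\<close> outside the
    spread of \<open>X\<close>, and that set shrinks as \<open>X\<close> grows.\<close>
  have gain: "real (card (ic_final V L (X \<union> {y}))) - real (card (ic_final V L X))
      = real (card (live_reach V L y - ic_final V L X))" if "X \<subseteq> V" for X
  proof -
    have "ic_final V L (X \<union> {y}) = ic_final V L X \<union> (live_reach V L y - ic_final V L X)"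
      unfolding ic_final_eq_UN_live_reach by blast
    also have "card \<dots> = card (ic_final V L X) + card (live_reach V L y - ic_final V L X)"
      using finite_ic_final[OF assms that] finite_live_reach[OF assms] by (intro card_Un_disjoint) auto
    finally show ?thesis by simp
  qed
  have "card (live_reach V L y - ic_final V L B) \<le> card (live_reach V L y - ic_final V L A)"
    using ic_final_mono[OF AB(1)] finite_live_reach[OF assms] by (intro card_mono) auto
  then show "real (card (ic_final V L (B \<union> {y}))) - real (card (ic_final V L B))
      \<le> real (card (ic_final V L (A \<union> {y}))) - real (card (ic_final V L A))"
    using gain[OF AB(2)] gain[of A] AB by simp
qed

lemma
  assumes "ic_instance V E p"
  shows sigma_IC_monotone_submodular: "monotone_submodular_on V (sigma_IC V E p)"
    and sigma_IC_nonneg: "0 \<le> sigma_IC V E p S"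
    and sigma_IC_V: "sigma_IC V E p V = real (card V)"
proof -
  have "finite V" using assms unfolding ic_instance_def by blast
  define P where "P = Pi_pmf E False (\<lambda>e. bernoulli_pmf (p e))"
  define spread where "spread S X = real (card (ic_final V {e \<in> E. X e} S))" for S X
  have sigma: "sigma_IC V E p = (\<lambda>S. measure_pmf.expectation P (spread S))"
    unfolding sigma_IC_def P_def spread_def by simp
  have "integrable (measure_pmf P) (spread S)" if "S \<subseteq> V" for S
  proof (rule measure_pmf.integrable_const_bound[where B = "real (card V)"])
    show "AE X in measure_pmf P. norm (spread S X) \<le> real (card V)"
      using card_mono[OF \<open>finite V\<close> ic_final_subset[OF that]] unfolding spread_def by (intro AE_I2) simp
  qed simp
  then show "monotone_submodular_on V (sigma_IC V E p)"
    unfolding sigma spread_def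
    by (intro monotone_submodular_on_integral card_ic_final_monotone_submodular \<open>finite V\<close>)
  show "0 \<le> sigma_IC V E p S" unfolding sigma spread_def by simp
  have "ic_final V L V = V" for L by (rule subset_antisym[OF ic_final_subset ic_final_superset]) simp
  then have "spread V = (\<lambda>_. real (card V))" unfolding spread_def by simp
  then show "sigma_IC V E p V = real (card V)" unfolding sigma by simp
qed

section \<open>Linear threshold\<close>

definition in_weight :: "('a \<times> 'a) set \<Rightarrow> ('a \<times> 'a \<Rightarrow> real) \<Rightarrow> 'a set \<Rightarrow> 'a \<Rightarrow> real" where
  "in_weight E b A u = (\<Sum>v\<in>{v \<in> A. (v, u) \<in> E}. b (v, u))"

declare lt_active.simps(2) [simp del]

lemma lt_active_Suc [simp]:
  "lt_active V E b \<theta> S (Suc t) =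
     lt_active V E b \<theta> S t \<union> {u \<in> V. \<theta> u \<le> in_weight E b (lt_active V E b \<theta> S t) u}"
  by (simp add: lt_active.simps(2) Let_def in_weight_def)

lemma finite_in_arcs: "finite E \<Longrightarrow> finite {v. (v, u) \<in> E}"
proof -
  assume "finite E"
  have "{v. (v, u) \<in> E} \<subseteq> fst ` E" by force
  then show ?thesis using \<open>finite E\<close> by (rule finite_subset[OF _ finite_imageI])
qed

lemma in_weight_mono:
  assumes "finite E" "\<forall>e\<in>E. 0 \<le> b e" "A \<subseteq> B"
  shows "in_weight E b A u \<le> in_weight E b B u"
  unfolding in_weight_def
proof (rule sum_mono2)
  show "finite {v \<in> B. (v, u) \<in> E}"
    using finite_in_arcs[OF assms(1), of u] by (rule rev_finite_subset) blast
  show "{v \<in> A. (v, u) \<in> E} \<subseteq> {v \<in> B. (v, u) \<in> E}" using assms(3) by blast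
  show "0 \<le> b (v, u)" if "v \<in> {v \<in> B. (v, u) \<in> E} - {v \<in> A. (v, u) \<in> E}" for v
    using that assms(2) by blast
qed

lemma in_weight_eq_sum_if:
  assumes "finite E"
  shows "in_weight E b A u = (\<Sum>v\<in>{v. (v, u) \<in> E}. if v \<in> A then b (v, u) else 0)"
  unfolding in_weight_def using sum.inter_filter[OF finite_in_arcs[OF assms], where g = "\<lambda>v. b (v, u)" and P = "\<lambda>v. v \<in> A"]
  by (simp add: conj_commute)

lemma lt_active_mono: "i \<le> j \<Longrightarrow> lt_active V E b \<theta> S i \<subseteq> lt_active V E b \<theta> S j"
  by (rule lift_Suc_mono_le[of "lt_active V E b \<theta> S"]) auto

lemma lt_final_subset: "lt_final V E b \<theta> S \<subseteq> S \<union> V"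
proof -
  have "lt_active V E b \<theta> S t \<subseteq> S \<union> V" for t by (induction t) auto
  then show ?thesis unfolding lt_final_def by (rule UN_least)
qed

lemma lt_final_superset: "S \<subseteq> lt_final V E b \<theta> S"
proof -
  have "S = lt_active V E b \<theta> S 0" by simp
  also have "\<dots> \<subseteq> lt_final V E b \<theta> S" unfolding lt_final_def by (rule UN_upper) simp
  finally show ?thesis .
qed

lemma lt_active_mono_seeds_nodes:
  assumes "finite E" "\<forall>e\<in>E. 0 \<le> b e" "A \<subseteq> B" "V' \<subseteq> V"
  shows "lt_active V' E b \<theta> A t \<subseteq> lt_active V E b \<theta> B t"
proof (induction t)
  case 0
  then show ?case using assms(3) by simp
next
  case (Suc t)
  have "{u \<in> V'. \<theta> u \<le> in_weight E b (lt_active V' E b \<theta> A t) u}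
      \<subseteq> {u \<in> V. \<theta> u \<le> in_weight E b (lt_active V E b \<theta> B t) u}"
    using in_weight_mono[OF assms(1,2) Suc.IH] assms(4) by (auto intro: order_trans)
  then show ?case unfolding lt_active_Suc using Suc.IH by blast
qed

lemma lt_final_mono:
  assumes "finite E" "\<forall>e\<in>E. 0 \<le> b e" "A \<subseteq> B"
  shows "lt_final V E b \<theta> A \<subseteq> lt_final V E b \<theta> B"
  unfolding lt_final_def using lt_active_mono_seeds_nodes[OF assms order_refl] by (rule UN_mono[OF order_refl])

lemma lt_active_cong:
  "\<forall>u\<in>V. \<theta> u = \<theta>' u \<Longrightarrow> lt_active V E b \<theta> S t = lt_active V E b \<theta>' S t"
  by (induction t) (auto simp: lt_active_Suc)

lemma finite_subset_UN_mono:
  assumes "finite X" "X \<subseteq> (\<Union>t. B t)" "\<And>i j. i \<le> j \<Longrightarrow> B i \<subseteq> (B (j::nat) :: 'a set)"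
  obtains t where "X \<subseteq> B t"
  using assms(1,2)
proof (induction X arbitrary: thesis rule: finite_induct)
  case (insert a X)
  obtain t where "X \<subseteq> B t" using insert by blast
  moreover obtain s where "a \<in> B s" using insert.prems by blast
  ultimately have "insert a X \<subseteq> B (max s t)"
    using assms(3)[of s "max s t"] assms(3)[of t "max s t"] by auto
  then show ?case by (rule insert.prems)
qed simp

lemma lt_active_eq_without_inactive:
  assumes "x \<notin> lt_active V E b \<theta> S t"
  shows "lt_active V E b \<theta> S t = lt_active (V - {x}) E b \<theta> S t"
  using assms
proof (induction t)
  case (Suc t)
  then have "x \<notin> lt_active V E b \<theta> S t" using lt_active_mono[of t "Suc t" V E b \<theta> S] by auto
  with Suc show ?case by auto
qed simp

lemma in_weight_lt_final_reached:
  assumes "finite E"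
  obtains t where "in_weight E b (lt_final V E b \<theta> S) x = in_weight E b (lt_active V E b \<theta> S t) x"
proof -
  let ?F = "lt_final V E b \<theta> S"
  have "finite {v \<in> ?F. (v, x) \<in> E}" using finite_in_arcs[OF assms, of x] by (rule rev_finite_subset) blast
  moreover have "{v \<in> ?F. (v, x) \<in> E} \<subseteq> (\<Union>t. lt_active V E b \<theta> S t)" unfolding lt_final_def by blast
  moreover have "lt_active V E b \<theta> S i \<subseteq> lt_active V E b \<theta> S j" if "i \<le> j" for i j
    using that by (rule lt_active_mono)
  ultimately obtain t where t: "{v \<in> ?F. (v, x) \<in> E} \<subseteq> lt_active V E b \<theta> S t"
    by (rule finite_subset_UN_mono)
  have "lt_active V E b \<theta> S t \<subseteq> ?F" unfolding lt_final_def by blast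
  with t have "in_weight E b ?F x = in_weight E b (lt_active V E b \<theta> S t) x"
    unfolding in_weight_def by (intro sum.cong) auto
  then show thesis by (rule that)
qed

text \<open>Until \<open>x\<close> becomes active, the process on \<open>V\<close> coincides with the process on \<open>V - {x}\<close>;
  so \<open>x\<close> is eventually activated iff its threshold is reached by the in-weight of the final
  active set of the process without \<open>x\<close>.\<close>

lemma lt_final_iff_threshold:
  assumes fin: "finite E" and nn: "\<forall>e\<in>E. 0 \<le> b e" and x: "x \<in> V" "x \<notin> S"
  shows "x \<in> lt_final V E b \<theta> S \<longleftrightarrow> \<theta> x \<le> in_weight E b (lt_final (V - {x}) E b \<theta> S) x"
proof -
  define F where "F = lt_final (V - {x}) E b \<theta> S"
  note eq = lt_active_eq_without_inactive[of x V E b \<theta> S]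
  have "(\<exists>t. x \<in> lt_active V E b \<theta> S t) \<longleftrightarrow> \<theta> x \<le> in_weight E b F x"
  proof
    assume "\<exists>t. x \<in> lt_active V E b \<theta> S t"
    then obtain t where "x \<in> lt_active V E b \<theta> S t" by blast
    then show "\<theta> x \<le> in_weight E b F x"
    proof (induction t)
      case (Suc t)
      show ?case
      proof (cases "x \<in> lt_active V E b \<theta> S t")
        case False
        then have "\<theta> x \<le> in_weight E b (lt_active (V - {x}) E b \<theta> S t) x"
          using Suc.prems eq[OF False] by auto
        also have "\<dots> \<le> in_weight E b F x"
          unfolding F_def lt_final_def by (intro in_weight_mono[OF fin nn]) blast
        finally show ?thesis .
      qed (rule Suc.IH)
    qed (use x(2) in simp)
  next
    assume h: "\<theta> x \<le> in_weight E b F x"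
    obtain t where wt: "in_weight E b F x = in_weight E b (lt_active (V - {x}) E b \<theta> S t) x"
      unfolding F_def by (rule in_weight_lt_final_reached[OF fin])
    show "\<exists>t. x \<in> lt_active V E b \<theta> S t"
    proof (cases "x \<in> lt_active V E b \<theta> S t")
      case False
      then have "x \<in> lt_active V E b \<theta> S (Suc t)" using h wt eq[OF False] x(1) by simp
      then show ?thesis by blast
    qed blast
  qed
  then show ?thesis unfolding F_def lt_final_def by blast
qed

lemma lt_final_update_threshold:
  assumes "finite E" "\<forall>e\<in>E. 0 \<le> b e" "x \<in> V" "x \<notin> S"
  shows "x \<in> lt_final V E b (\<theta>(x := y)) S \<longleftrightarrow> y \<le> in_weight E b (lt_final (V - {x}) E b \<theta> S) x"
proof -
  have "lt_final (V - {x}) E b (\<theta>(x := y)) S = lt_final (V - {x}) E b \<theta> S"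
    unfolding lt_final_def using lt_active_cong[of "V - {x}" "\<theta>(x := y)" \<theta>] by auto
  then show ?thesis using lt_final_iff_threshold[OF assms, of "\<theta>(x := y)"] by simp
qed

abbreviation unif01 :: "real measure" where
  "unif01 \<equiv> uniform_measure lborel {0..1}"

definition lt_threshold_space :: "'a set \<Rightarrow> ('a \<Rightarrow> real) measure" where
  "lt_threshold_space V = PiM V (\<lambda>_. unif01)"

lemma prob_space_unif01: "prob_space unif01"
  by (rule prob_space_uniform_measure) (simp_all add: emeasure_lborel_Icc)

lemma prob_space_lt_threshold_space: "prob_space (lt_threshold_space V)"
  unfolding lt_threshold_space_def by (rule prob_space_PiM) (rule prob_space_unif01)

lemma measure_unif01_atMost: "0 \<le> w \<Longrightarrow> w \<le> 1 \<Longrightarrow> measure unif01 {..w} = w"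
proof -
  assume w: "0 \<le> w" "w \<le> 1"
  have "emeasure unif01 {..w} = emeasure lborel ({0..1} \<inter> {..w}) / emeasure lborel {0..1::real}"
    by (rule emeasure_uniform_measure) auto
  also have "{0..1} \<inter> {..w} = {0..w}" using w by auto
  finally have "emeasure unif01 {..w} = ennreal w"
    using w by (simp add: emeasure_lborel_Icc divide_ennreal_def)
  then show ?thesis unfolding measure_def using w by simp
qed

lemma lt_active_measurable:
  assumes "finite E"
  shows "Measurable.pred (lt_threshold_space V) (\<lambda>\<theta>. x \<in> lt_active V E b \<theta> S t)"
proof (induction t arbitrary: x)
  case (Suc t)
  let ?M = "lt_threshold_space V"
  let ?w = "\<lambda>\<theta>. \<Sum>v\<in>{v. (v, x) \<in> E}. if v \<in> lt_active V E b \<theta> S t then b (v, x) else 0"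
  have "?w \<in> borel_measurable ?M" using Suc.IH by measurable
  moreover have "(\<lambda>\<theta>. \<theta> x) \<in> borel_measurable ?M" if "x \<in> V"
    using measurable_component_singleton[OF that, of "\<lambda>_. unif01"]
    unfolding lt_threshold_space_def by (simp add: measurable_cong_sets[OF refl sets_uniform_measure])
  ultimately have "Measurable.pred ?M (\<lambda>\<theta>. x \<in> V \<and> \<theta> x \<le> ?w \<theta>)"
    unfolding pred_def by (cases "x \<in> V") (simp_all add: borel_measurable_le)
  moreover have "x \<in> lt_active V E b \<theta> S (Suc t) \<longleftrightarrow> x \<in> lt_active V E b \<theta> S t \<or> (x \<in> V \<and> \<theta> x \<le> ?w \<theta>)"
    for \<theta> by (simp add: in_weight_eq_sum_if[OF assms])
  ultimately show ?case using Suc.IH[of x] by (simp add: pred_intros_logic)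
qed simp

lemma lt_final_measurable:
  assumes "finite E"
  shows "{\<theta> \<in> space (lt_threshold_space V). x \<in> lt_final V E b \<theta> S} \<in> sets (lt_threshold_space V)"
proof -
  have "{\<theta> \<in> space (lt_threshold_space V). x \<in> lt_final V E b \<theta> S}
      = (\<Union>t. {\<theta> \<in> space (lt_threshold_space V). x \<in> lt_active V E b \<theta> S t})"
    unfolding lt_final_def by blast
  also have "\<dots> \<in> sets (lt_threshold_space V)"
    using lt_active_measurable[OF assms] by (intro sets.countable_UN'') auto
  finally show ?thesis .
qed

definition lt_activation_prob :: "'a set \<Rightarrow> ('a \<times> 'a) set \<Rightarrow> ('a \<times> 'a \<Rightarrow> real) \<Rightarrow> 'a \<Rightarrow> 'a set \<Rightarrow> real" where
  "lt_activation_prob V E b x S =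
     measure (lt_threshold_space V) {\<theta> \<in> space (lt_threshold_space V). x \<in> lt_final V E b \<theta> S}"

lemma lt_activation_prob_nonneg: "0 \<le> lt_activation_prob V E b x S"
  unfolding lt_activation_prob_def by simp

lemma lt_activation_prob_seed: "x \<in> S \<Longrightarrow> lt_activation_prob V E b x S = 1"
proof -
  assume "x \<in> S"
  interpret prob_space "lt_threshold_space V" by (rule prob_space_lt_threshold_space)
  have "{\<theta> \<in> space (lt_threshold_space V). x \<in> lt_final V E b \<theta> S} = space (lt_threshold_space V)"
    using lt_final_superset[of S V E b] \<open>x \<in> S\<close> by blast
  then show ?thesis unfolding lt_activation_prob_def by (simp add: prob_space)
qed

lemma lt_activation_prob_outside: "x \<notin> V \<Longrightarrow> x \<notin> S \<Longrightarrow> lt_activation_prob V E b x S = 0"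
proof -
  assume "x \<notin> V" "x \<notin> S"
  then have "{\<theta> \<in> space (lt_threshold_space V). x \<in> lt_final V E b \<theta> S} = {}"
    using lt_final_subset[of V E b _ S] by blast
  then show ?thesis unfolding lt_activation_prob_def by (simp only: measure_empty)
qed

lemma lt_activation_prob_mono:
  assumes "finite E" "\<forall>e\<in>E. 0 \<le> b e" "A \<subseteq> B"
  shows "lt_activation_prob V E b x A \<le> lt_activation_prob V E b x B"
proof -
  interpret prob_space "lt_threshold_space V" by (rule prob_space_lt_threshold_space)
  show ?thesis
    unfolding lt_activation_prob_def using lt_final_mono[OF assms] lt_final_measurable[OF assms(1)]
    by (intro finite_measure_mono) auto
qed

lemma product_sigma_finite_unif01: "product_sigma_finite (\<lambda>_. unif01)"
  by (rule product_sigma_finite.intro) (rule prob_space_imp_sigma_finite[OF prob_space_unif01])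

lemma lt_activation_prob_eq_expected_in_weight:
  assumes finV: "finite V" and fin: "finite E" and nn: "\<forall>e\<in>E. 0 \<le> b e"
    and x: "x \<in> V" "x \<notin> S" and bnd: "(\<Sum>v\<in>{v. (v, x) \<in> E}. b (v, x)) \<le> 1"
  shows "lt_activation_prob V E b x S =
    integral\<^sup>L (lt_threshold_space (V - {x})) (\<lambda>\<theta>. in_weight E b (lt_final (V - {x}) E b \<theta> S) x)"
proof -
  define V' where "V' = V - {x}"
  have V: "V = insert x V'" "x \<notin> V'" "finite V'" using x finV unfolding V'_def by auto
  define Act where "Act = {\<theta> \<in> space (lt_threshold_space V). x \<in> lt_final V E b \<theta> S}"
  define W where "W \<theta> = in_weight E b (lt_final V' E b \<theta> S) x" for \<theta>
  interpret prob_space "lt_threshold_space V" by (rule prob_space_lt_threshold_space)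
  have Act: "Act \<in> sets (lt_threshold_space V)" unfolding Act_def by (rule lt_final_measurable[OF fin])
  have W: "0 \<le> W \<theta>" "W \<theta> \<le> 1" for \<theta>
  proof -
    show "0 \<le> W \<theta>" unfolding W_def in_weight_def using nn by (intro sum_nonneg) auto
    have "W \<theta> \<le> in_weight E b UNIV x" unfolding W_def by (rule in_weight_mono[OF fin nn]) simp
    then show "W \<theta> \<le> 1" using bnd unfolding in_weight_def by simp
  qed
  have "lt_activation_prob V E b x S = integral\<^sup>L (lt_threshold_space V) (indicator Act)"
    unfolding lt_activation_prob_def Act_def integral_indicator by (simp add: Int_absorb2)
  also have "\<dots> = integral\<^sup>L (PiM (insert x V') (\<lambda>_. unif01)) (indicator Act)"
    unfolding lt_threshold_space_def V(1) by simp
  also have "\<dots> = (LINT \<theta>|PiM V' (\<lambda>_. unif01). LINT y|unif01. indicator Act (\<theta>(x := y)))"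
  proof (rule product_sigma_finite.product_integral_insert[OF product_sigma_finite_unif01 V(3,2)])
    show "integrable (PiM (insert x V') (\<lambda>_. unif01)) (indicat_real Act)"
      using Act emeasure_finite unfolding lt_threshold_space_def V(1)
      by (intro integrable_real_indicator) (auto simp: less_top)
  qed
  also have "\<dots> = integral\<^sup>L (lt_threshold_space V') W"
    unfolding lt_threshold_space_def[symmetric]
  proof (rule Bochner_Integration.integral_cong[OF refl])
    fix \<theta> assume \<theta>: "\<theta> \<in> space (lt_threshold_space V')"
    have "indicator Act (\<theta>(x := y)) = (indicator {..W \<theta>} y :: real)" for y
    proof -
      have "\<theta>(x := y) \<in> space (lt_threshold_space V)"
        using \<theta> V(1,2) unfolding lt_threshold_space_def space_PiM by (auto simp: PiE_def extensional_def)
      then show ?thesis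
        using lt_final_update_threshold[OF fin nn x, of \<theta> y]
        unfolding Act_def W_def V'_def indicator_def by auto
    qed
    then have "(LINT y|unif01. indicator Act (\<theta>(x := y))) = (LINT y|unif01. (indicator {..W \<theta>} y :: real))"
      by simp
    also have "\<dots> = measure unif01 {..W \<theta>}" by (simp add: integral_indicator)
    also have "\<dots> = W \<theta>" using measure_unif01_atMost[OF W] .
    finally show "(LINT y|unif01. indicator Act (\<theta>(x := y))) = W \<theta>" .
  qed
  finally show ?thesis unfolding W_def V'_def .
qed

lemma lt_activation_prob_rec:
  assumes "finite V" and fin: "finite E" and "\<forall>e\<in>E. 0 \<le> b e"
    and "x \<in> V" "x \<notin> S" and "(\<Sum>v\<in>{v. (v, x) \<in> E}. b (v, x)) \<le> 1"
  shows "lt_activation_prob V E b x S = (\<Sum>v\<in>{v. (v, x) \<in> E}. b (v, x) * lt_activation_prob (V - {x}) E b v S)"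
proof -
  define M where "M = lt_threshold_space (V - {x})"
  define A where "A v = {\<theta> \<in> space M. v \<in> lt_final (V - {x}) E b \<theta> S}" for v
  interpret prob_space M unfolding M_def by (rule prob_space_lt_threshold_space)
  have A: "A v \<in> sets M" for v unfolding A_def M_def by (rule lt_final_measurable[OF fin])
  have "lt_activation_prob V E b x S = integral\<^sup>L M (\<lambda>\<theta>. \<Sum>v\<in>{v. (v, x) \<in> E}. b (v, x) * indicator (A v) \<theta>)"
    unfolding lt_activation_prob_eq_expected_in_weight[OF assms] in_weight_eq_sum_if[OF fin] M_def[symmetric]
  proof (rule Bochner_Integration.integral_cong[OF refl])
    fix \<theta> assume "\<theta> \<in> space M"
    then show "(\<Sum>v\<in>{v. (v, x) \<in> E}. if v \<in> lt_final (V - {x}) E b \<theta> S then b (v, x) else 0)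
        = (\<Sum>v\<in>{v. (v, x) \<in> E}. b (v, x) * indicator (A v) \<theta>)"
      unfolding A_def by (intro sum.cong) (auto simp: indicator_def)
  qed
  also have "\<dots> = (\<Sum>v\<in>{v. (v, x) \<in> E}. b (v, x) * integral\<^sup>L M (indicator (A v)))"
    using A emeasure_finite
    by (subst Bochner_Integration.integral_sum)
      (auto intro!: integrable_mult_right integrable_real_indicator simp: less_top[symmetric])
  also have "\<dots> = (\<Sum>v\<in>{v. (v, x) \<in> E}. b (v, x) * lt_activation_prob (V - {x}) E b v S)"
    unfolding lt_activation_prob_def A_def M_def integral_indicator by (simp add: Int_absorb2)
  finally show ?thesis .
qed

lemma lt_activation_prob_submodular:
  assumes fin: "finite E" and nn: "\<forall>e\<in>E. 0 \<le> b e"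
    and "finite V" and "\<forall>u\<in>V. (\<Sum>v\<in>{v. (v, u) \<in> E}. b (v, u)) \<le> 1"
    and AB: "A \<subseteq> B" and y: "y \<notin> B"
  shows "lt_activation_prob V E b x (B \<union> {y}) - lt_activation_prob V E b x B
       \<le> lt_activation_prob V E b x (A \<union> {y}) - lt_activation_prob V E b x A"
  using assms(3,4)
proof (induction "card V" arbitrary: V x rule: less_induct)
  case less
  let ?P = "lt_activation_prob V E b x"
  have mono: "?P A \<le> ?P (A \<union> {y})" "?P A \<le> ?P B"
    using AB by (auto intro: lt_activation_prob_mono[OF fin nn])
  consider "x \<in> A" | "x \<in> B - A" | "x = y" | "x \<notin> V" "x \<notin> B" "x \<noteq> y" | "x \<in> V" "x \<notin> B" "x \<noteq> y"
    using AB by blast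
  then show ?case
  proof cases
    case 1
    then have "x \<in> B" using AB by blast
    with 1 show ?thesis by (simp add: lt_activation_prob_seed)
  next
    case 2
    then show ?thesis using mono(1) by (simp add: lt_activation_prob_seed)
  next
    case 3
    then show ?thesis using mono(2) by (simp add: lt_activation_prob_seed)
  next
    case 4
    moreover have "x \<notin> A" using 4 AB by blast
    ultimately show ?thesis by (simp add: lt_activation_prob_outside)
  next
    case 5
    let ?Q = "lt_activation_prob (V - {x}) E b"
    have "x \<notin> A" using 5 AB by blast
    have "card (V - {x}) < card V" using less.prems(1) \<open>x \<in> V\<close> by (rule card_Diff1_less)
    moreover have "finite (V - {x})" "\<forall>u\<in>V - {x}. (\<Sum>v\<in>{v. (v, u) \<in> E}. b (v, u)) \<le> 1"
      using less.prems by auto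
    ultimately have IH: "?Q v (B \<union> {y}) - ?Q v B \<le> ?Q v (A \<union> {y}) - ?Q v A" for v
      by (rule less.hyps)
    have "(\<Sum>v\<in>{v. (v, x) \<in> E}. b (v, x)) \<le> 1" using less.prems(2) 5 by blast
    note rec = lt_activation_prob_rec[OF less.prems(1) fin nn \<open>x \<in> V\<close> _ this]
    have "?P (B \<union> {y}) - ?P B = (\<Sum>v\<in>{v. (v, x) \<in> E}. b (v, x) * (?Q v (B \<union> {y}) - ?Q v B))"
      using 5 by (simp add: rec sum_subtractf right_diff_distrib)
    also have "\<dots> \<le> (\<Sum>v\<in>{v. (v, x) \<in> E}. b (v, x) * (?Q v (A \<union> {y}) - ?Q v A))"
      using nn IH by (intro sum_mono mult_left_mono) auto
    also have "\<dots> = ?P (A \<union> {y}) - ?P A"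
      using 5 \<open>x \<notin> A\<close> by (simp add: rec sum_subtractf right_diff_distrib)
    finally show ?thesis .
  qed
qed

lemma sigma_LT_eq_sum:
  assumes "finite V" "finite E" "S \<subseteq> V"
  shows "sigma_LT V E b S = (\<Sum>x\<in>V. lt_activation_prob V E b x S)"
proof -
  define M where "M = lt_threshold_space V"
  define A where "A x = {\<theta> \<in> space M. x \<in> lt_final V E b \<theta> S}" for x
  interpret prob_space M unfolding M_def by (rule prob_space_lt_threshold_space)
  have A: "A x \<in> sets M" for x unfolding A_def M_def by (rule lt_final_measurable[OF assms(2)])
  have "sigma_LT V E b S = integral\<^sup>L M (\<lambda>\<theta>. \<Sum>x\<in>V. indicator (A x) \<theta>)"
    unfolding sigma_LT_def lt_threshold_space_def[symmetric] M_def[symmetric]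
  proof (rule Bochner_Integration.integral_cong[OF refl])
    fix \<theta> assume "\<theta> \<in> space M"
    then have "(\<Sum>x\<in>V. indicator (A x) \<theta> :: real) = real (card (V \<inter> lt_final V E b \<theta> S))"
      using assms(1) unfolding A_def by (simp add: indicator_def of_bool_def sum.If_cases)
    also have "V \<inter> lt_final V E b \<theta> S = lt_final V E b \<theta> S"
      using lt_final_subset[of V E b \<theta> S] assms(3) by blast
    finally show "real (card (lt_final V E b \<theta> S)) = (\<Sum>x\<in>V. indicator (A x) \<theta>)" by simp
  qed
  also have "\<dots> = (\<Sum>x\<in>V. integral\<^sup>L M (indicator (A x)))"
    using A emeasure_finite
    by (subst Bochner_Integration.integral_sum) (auto intro!: integrable_real_indicator simp: less_top[symmetric])
  also have "\<dots> = (\<Sum>x\<in>V. lt_activation_prob V E b x S)"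
    unfolding lt_activation_prob_def A_def M_def integral_indicator by (simp add: Int_absorb2)
  finally show ?thesis .
qed

lemma
  assumes "lt_instance V E b"
  shows sigma_LT_monotone_submodular: "monotone_submodular_on V (sigma_LT V E b)"
    and sigma_LT_nonneg: "S \<subseteq> V \<Longrightarrow> 0 \<le> sigma_LT V E b S"
    and sigma_LT_V: "sigma_LT V E b V = real (card V)"
proof -
  have finV: "finite V" and nn: "\<forall>e\<in>E. 0 \<le> b e" and "E \<subseteq> V \<times> V"
    and bnd: "\<forall>u\<in>V. (\<Sum>v\<in>{v. (v, u) \<in> E}. b (v, u)) \<le> 1"
    using assms unfolding lt_instance_def by auto
  then have fin: "finite E" by (meson finite_SigmaI finite_subset)
  have "monotone_submodular_on V (\<lambda>S. \<Sum>x\<in>V. lt_activation_prob V E b x S)"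
  proof (intro monotone_submodular_on_sum monotone_submodular_onI)
    show "lt_activation_prob V E b x A \<le> lt_activation_prob V E b x B" if "A \<subseteq> B" for x A B
      using lt_activation_prob_mono[OF fin nn that] .
    show "lt_activation_prob V E b x (B \<union> {y}) - lt_activation_prob V E b x B
        \<le> lt_activation_prob V E b x (A \<union> {y}) - lt_activation_prob V E b x A"
      if "A \<subseteq> B" "y \<in> V - B" for x A B y
      using lt_activation_prob_submodular[OF fin nn finV bnd that(1)] that(2) by blast
  qed
  then show "monotone_submodular_on V (sigma_LT V E b)"
    by (rule monotone_submodular_on_cong[rotated]) (simp add: sigma_LT_eq_sum[OF finV fin])
  show "S \<subseteq> V \<Longrightarrow> 0 \<le> sigma_LT V E b S"
    by (simp add: sigma_LT_eq_sum[OF finV fin] lt_activation_prob_nonneg sum_nonneg)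
  show "sigma_LT V E b V = real (card V)"
    using sigma_LT_eq_sum[OF finV fin subset_refl] by (simp add: lt_activation_prob_seed)
qed

theorem theorem2:
  fixes V :: "'a set" and E :: "('a \<times> 'a) set" and q :: "'a \<times> 'a \<Rightarrow> real"
    and \<sigma> :: "'a set \<Rightarrow> real" and c :: "'a \<Rightarrow> real"
    and \<eta> \<epsilon> \<phi> :: real
  assumes model: "(ic_instance V E q \<and> \<sigma> = sigma_IC V E q) \<or> (lt_instance V E q \<and> \<sigma> = sigma_LT V E q)"
    and cost_pos: "\<forall>v\<in>V. c v > 0"
    and eta_le: "\<eta> \<le> real (card V)"
    and eps_pos: "\<epsilon> > 0"
    and eps_lt: "\<epsilon> < \<eta>"
    and phi_pos: "\<phi> > 0"
  shows "\<exists>\<delta>. 0 < \<delta> \<and> \<delta> < 1 \<and>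
    (\<forall>\<sigma>' :: 'a set \<Rightarrow> real.
       (\<forall>S\<subseteq>V. (1 - \<delta>) * \<sigma> S \<le> \<sigma>' S \<and> \<sigma>' S \<le> \<sigma> S) \<longrightarrow>
       (\<exists>S. greedy_output V \<sigma>' c \<eta> \<epsilon> S) \<and>
       (\<forall>S T. greedy_output V \<sigma>' c \<eta> \<epsilon> S \<longrightarrow> T \<subseteq> V \<longrightarrow> \<sigma> T \<ge> \<eta> \<longrightarrow>
          set_cost c S \<le> (1 + \<phi>) * (1 + ln (\<eta> / \<epsilon>)) * set_cost c T))"
proof -
  have "finite V" "monotone_submodular_on V \<sigma>" "0 \<le> \<sigma> {}" "\<sigma> V = real (card V)"
    using model
    by (auto simp: ic_instance_def lt_instance_def sigma_IC_monotone_submodular sigma_IC_nonneg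
        sigma_IC_V sigma_LT_monotone_submodular sigma_LT_nonneg sigma_LT_V)
  then obtain \<delta> where "0 < \<delta>" "\<delta> < 1"
    and terminates: "\<And>\<sigma>'. approx_below V \<delta> \<sigma> \<sigma>' \<Longrightarrow> \<exists>S. greedy_output V \<sigma>' c \<eta> \<epsilon> S"
    and bound: "\<And>\<sigma>' S T. approx_below V \<delta> \<sigma> \<sigma>' \<Longrightarrow> greedy_output V \<sigma>' c \<eta> \<epsilon> S \<Longrightarrow> T \<subseteq> V
      \<Longrightarrow> \<eta> \<le> \<sigma> T \<Longrightarrow> set_cost c S \<le> (1 + ln (\<eta> / \<epsilon>)) * set_cost c T"
    using greedy_mintss_approx_bound[of V \<sigma> c \<epsilon> \<eta>] cost_pos eps_pos eps_lt eta_le by auto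
  have slack: "x \<le> (1 + \<phi>) * x" if "0 \<le> x" for x :: real
    using mult_nonneg_nonneg[OF less_imp_le[OF phi_pos] that] by (simp add: algebra_simps)
  show ?thesis
  proof (intro exI[of _ \<delta>] conjI allI impI)
    fix \<sigma>' assume "\<forall>S\<subseteq>V. (1 - \<delta>) * \<sigma> S \<le> \<sigma>' S \<and> \<sigma>' S \<le> \<sigma> S"
    then show "\<exists>S. greedy_output V \<sigma>' c \<eta> \<epsilon> S"
      by (intro terminates) (simp add: approx_below_def)
  next
    fix \<sigma>' S T assume "\<forall>S\<subseteq>V. (1 - \<delta>) * \<sigma> S \<le> \<sigma>' S \<and> \<sigma>' S \<le> \<sigma> S"
      and "greedy_output V \<sigma>' c \<eta> \<epsilon> S" "T \<subseteq> V" "\<eta> \<le> \<sigma> T"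
    then have "set_cost c S \<le> (1 + ln (\<eta> / \<epsilon>)) * set_cost c T"
      by (intro bound) (simp_all add: approx_below_def)
    moreover have "0 \<le> (1 + ln (\<eta> / \<epsilon>)) * set_cost c T"
      using set_cost_nonneg[OF cost_pos \<open>T \<subseteq> V\<close>] eps_pos eps_lt by simp
    ultimately show "set_cost c S \<le> (1 + \<phi>) * (1 + ln (\<eta> / \<epsilon>)) * set_cost c T"
      using slack by (metis mult.assoc order_trans)
  qed (use \<open>0 < \<delta>\<close> \<open>\<delta> < 1\<close> in auto)
qed

end
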